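(* Let $I$ be a quasipolar general ring and $e=e^2\in I$. Then $eIe$ is a quasipolar general ring.
   Context: A general ring is an associative ring not necessarily having an identity; $eIe=\{eae\mid a\in I\}$. For a general ring $K$ and $p,q\in K$, $p*q=p+q-pq$; $Q(K)=\{q\in K\mid p*q=0=q*p\text{ for some }p\in K\}$; $\mathrm{comm}_K(a)=\{x\in K\mid xa=ax\}$, $\mathrm{comm}_K^2(a)=\{x\in K\mid xy=yx\text{ for all }y\in\mathrm{comm}_K(a)\}$; $QN(K)=\{q\in K\mid qx\in Q(K)\text{ for all }x\in\mathrm{comm}_K(q)\}$. An element $a\in K$ is quasipolar in $K$ if there is an idempotent $p\in\mathrm{comm}_K^2(a)$ with $a+p\in Q(K)$ and $a-ap\in QN(K)$; $K$ is a quasipolar general ring if every element of $K$ is quasipolar in $K$. *)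

theory Defs
  imports Main
begin

text \<open>A general ring is modelled by the type class ring (associative, not necessarily
unital). All notions are relativised to a subset K of the ambient ring, so that they
can be applied to the subring eIe with the inherited operations.\<close>

definition circ :: "'a::ring \<Rightarrow> 'a \<Rightarrow> 'a" where
  "circ p q = p + q - p * q"

definition Qset :: "'a::ring set \<Rightarrow> 'a set" where
  "Qset K = {q \<in> K. \<exists>p \<in> K. circ p q = 0 \<and> circ q p = 0}"

definition comm_in :: "'a::ring set \<Rightarrow> 'a \<Rightarrow> 'a set" where
  "comm_in K a = {x \<in> K. x * a = a * x}"

definition comm2_in :: "'a::ring set \<Rightarrow> 'a \<Rightarrow> 'a set" where
  "comm2_in K a = {x \<in> K. \<forall>y \<in> comm_in K a. x * y = y * x}"

definition QN :: "'a::ring set \<Rightarrow> 'a set" where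
  "QN K = {q \<in> K. \<forall>x \<in> comm_in K q. q * x \<in> Qset K}"

definition quasipolar_in :: "'a::ring set \<Rightarrow> 'a \<Rightarrow> bool" where
  "quasipolar_in K a \<longleftrightarrow>
     (\<exists>p. p * p = p \<and> p \<in> comm2_in K a \<and> a + p \<in> Qset K \<and> a - a * p \<in> QN K)"

definition quasipolar_general_ring :: "'a::ring set \<Rightarrow> bool" where
  "quasipolar_general_ring K \<longleftrightarrow> (\<forall>a \<in> K. quasipolar_in K a)"

end

theory Submission
  imports Defs
begin

text \<open>Let \<open>a \<in> eIe\<close> and let \<open>p\<close> be a spectral idempotent of \<open>a\<close> in \<open>I\<close>. Since \<open>e\<close> commutes
with \<open>a\<close>, it commutes with \<open>p\<close>, so \<open>pe\<close> is an idempotent of \<open>eIe\<close>. Quasi-inverses inherit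
every commutation relation of the element they invert, so for any \<open>x\<close> commuting with \<open>e\<close>
the quasi-inverse \<open>q\<close> of \<open>x\<close> yields the quasi-inverse \<open>qe\<close> of \<open>xe\<close> in \<open>eIe\<close>. This transports
\<open>a + p \<in> Q(I)\<close> to \<open>a + pe \<in> Q(eIe)\<close> and \<open>a - ap \<in> QN(I)\<close> to \<open>a - a(pe) \<in> QN(eIe)\<close>.\<close>

definition corner :: "'a::ring \<Rightarrow> 'a set" where
  "corner e = {e * a * e | a. True}"

lemma mem_corner_iff:
  assumes "e * e = e"
  shows "y \<in> corner e \<longleftrightarrow> e * y = y \<and> y * e = y"
proof
  assume "y \<in> corner e"
  then obtain a where "y = e * a * e" by (auto simp: corner_def)
  then show "e * y = y \<and> y * e = y"
    using assms by (metis mult.assoc)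
next
  assume "e * y = y \<and> y * e = y"
  then have "y = e * y * e" by simp
  then show "y \<in> corner e" by (auto simp: corner_def)
qed

lemma mult_idem_mem_corner:
  assumes "e * e = e" and "e * x = x * e"
  shows "x * e \<in> corner e"
  using assms by (simp add: mem_corner_iff) (metis mult.assoc)

lemma quasi_inverse_commute:
  fixes e q x :: "'a::ring"
  assumes "circ q x = 0" and "circ x q = 0" and "e * x = x * e"
  shows "e * q = q * e"
proof -
  have xq: "x * q = x + q" and qx: "q * x = q + x"
    using assms(1,2) by (simp_all add: circ_def algebra_simps)
  \<comment> \<open>\<open>W\<close> is the formal expansion of \<open>(1 - q) e (1 - x) (1 - q)\<close>, which equals \<open>(1 - q) e\<close>
     and, after moving \<open>e\<close> past \<open>1 - x\<close>, also \<open>e (1 - q)\<close>; no unit is needed\<close>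
  define W where "W = e - e*x - e*q + e*x*q - q*e + q*e*x + q*e*q - q*e*x*q"
  have "W = e - e*x - e*q + e*(x*q) - q*e + q*e*x + q*e*q - q*e*(x*q)"
    by (simp add: W_def mult.assoc)
  also have "\<dots> = e - q * e" by (simp add: xq algebra_simps)
  finally have W_left: "W = e - q * e" .
  have exq: "e*x*q = x*e*q" by (simp add: assms(3))
  have qex: "q*e*x = q*e + x*e" and qexq: "q*e*x*q = q*e*q + x*e*q"
    by (metis assms(3) mult.assoc qx distrib_right)+
  have W_right: "W = e - e * q"
    unfolding W_def exq qex qexq by (simp add: assms(3) algebra_simps)
  from W_left W_right show ?thesis by simp
qed

lemma circ_mult_idem:
  assumes "e * e = e" and "e * x = x * e"
  shows "circ (q * e) (x * e) = circ q x * e"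
proof -
  have "q * e * (x * e) = q * x * e" by (metis assms mult.assoc)
  then show ?thesis unfolding circ_def by (simp add: algebra_simps)
qed

lemma Qset_mult_idem_corner:
  assumes ee: "e * e = e" and x: "x \<in> Qset UNIV" and ex: "e * x = x * e"
  shows "x * e \<in> Qset (corner e)"
proof -
  from x obtain q where qx: "circ q x = 0" and xq: "circ x q = 0"
    by (auto simp: Qset_def)
  have eq: "e * q = q * e" using quasi_inverse_commute[OF qx xq ex] .
  have "circ (q * e) (x * e) = 0" and "circ (x * e) (q * e) = 0"
    using circ_mult_idem[OF ee ex, of q] circ_mult_idem[OF ee eq, of x] qx xq by simp_all
  then show ?thesis
    using mult_idem_mem_corner[OF ee ex] mult_idem_mem_corner[OF ee eq]
    unfolding Qset_def by blast
qed

lemma QN_corner: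
  assumes ee: "e * e = e" and b: "b \<in> QN UNIV" and "b \<in> corner e"
  shows "b \<in> QN (corner e)"
  unfolding QN_def
proof (intro CollectI conjI ballI)
  show "b \<in> corner e" by fact
  fix x assume "x \<in> comm_in (corner e) b"
  then have "x \<in> corner e" and "x * b = b * x" by (auto simp: comm_in_def)
  then have "b * x \<in> Qset UNIV" and "b * x \<in> corner e"
    using b \<open>b \<in> corner e\<close> ee
    by (auto simp: QN_def comm_in_def mem_corner_iff) (metis mult.assoc)+
  then show "b * x \<in> Qset (corner e)"
    using Qset_mult_idem_corner[OF ee] ee by (metis mem_corner_iff)
qed

lemma comm2_corner:
  assumes ee: "e * e = e" and a: "a \<in> corner e" and p: "p \<in> comm2_in UNIV a"
  shows "p * e \<in> comm2_in (corner e) a"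
proof -
  have pcomm: "p * y = y * p" if "y * a = a * y" for y
    using p that by (auto simp: comm2_in_def comm_in_def)
  have pe: "e * p = p * e"
    using pcomm[of e] a ee by (simp add: mem_corner_iff)
  have "p * e * y = y * (p * e)" if "y \<in> corner e" "y * a = a * y" for y
  proof -
    have "p * e * y = p * y"
      using that(1) ee by (simp add: mult.assoc mem_corner_iff)
    also have "\<dots> = y * (p * e)"
      using pcomm[OF that(2)] that(1) ee pe by (metis mult.assoc mem_corner_iff)
    finally show ?thesis .
  qed
  then show ?thesis
    using mult_idem_mem_corner[OF ee pe] by (auto simp: comm2_in_def comm_in_def)
qed

lemma quasipolar_in_corner:
  assumes ee: "e * e = e" and a: "a \<in> corner e" and "quasipolar_in UNIV a"
  shows "quasipolar_in (corner e) a"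
proof -
  obtain p where pp: "p * p = p" and pc: "p \<in> comm2_in UNIV a"
    and pQ: "a + p \<in> Qset UNIV" and pQN: "a - a * p \<in> QN UNIV"
    using assms(3) unfolding quasipolar_in_def by blast
  have ea: "e * a = a" and ae: "a * e = a" using a ee by (simp_all add: mem_corner_iff)
  have pe: "e * p = p * e"
    using pc ea ae by (auto simp: comm2_in_def comm_in_def)
  have ap: "a * (p * e) = a * p" by (metis ae mult.assoc pe)
  have "p * e * (p * e) = p * e" by (metis ee mult.assoc pe pp)
  moreover have "p * e \<in> comm2_in (corner e) a" using comm2_corner[OF ee a pc] .
  moreover have "a + p * e \<in> Qset (corner e)"
    using Qset_mult_idem_corner[OF ee pQ] ea ae pe by (simp add: algebra_simps)
  moreover have "a - a * (p * e) \<in> QN (corner e)"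
  proof -
    have "e * (a * p) = a * p" and "a * p * e = a * p"
      by (metis ea mult.assoc, metis ap mult.assoc)
    then have "a - a * p \<in> corner e"
      using ee ea ae by (simp add: mem_corner_iff algebra_simps)
    then show ?thesis using QN_corner[OF ee pQN] ap by simp
  qed
  ultimately show ?thesis unfolding quasipolar_in_def by blast
qed

theorem theorem3p5:
  fixes e :: "'a::ring"
  assumes "quasipolar_general_ring (UNIV :: 'a set)"
    and "e * e = e"
  shows "quasipolar_general_ring {e * a * e | a. True}"
  using assms quasipolar_in_corner
  unfolding quasipolar_general_ring_def corner_def[symmetric] by blast

end
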